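(* A canonical closed term $t$ of $\Psi$ is in normal form (with respect to $\Psi$) if and only if $\langle\!\langle t\rangle\!\rangle_\Psi$ is in $\rightarrow_h$-normal form.
   Context: $\lambda$-terms: $M::=x\mid\lambda x.M\mid MN$, variables from a set $\Upsilon$ with a fixed total order, $FV(M)$ the ordered sequence of free variables. Weak call-by-name reduction: $(\lambda x.M)N\rightarrow_h M\{N/x\}$, closed under $M\rightarrow_h N\Rightarrow ML\rightarrow_h NL$. $\Psi$: binary function symbol $\mathbf{app}$, binary constructor $\mathbf{capp}$, constructors $c_{x,M}$ ($M$ a $\lambda$-term, $x\in\Upsilon$) of arity the length of $FV(\lambda x.M)$. Translations: $[\![x]\!]'=x$, $[\![\lambda x.M]\!]'=c_{x,M}(x_1,\dots,x_n)$ ($FV(\lambda x.M)=x_1,\dots,x_n$), $[\![MN]\!]'=\mathbf{capp}([\![M]\!]',[\![N]\!]')$; $[\![x]\!]_\Psi=x$, $[\![\lambda x.M]\!]_\Psi=c_{x,M}(x_1,\dots,x_n)$, $[\![MN]\!]_\Psi=\mathbf{app}([\![M]\!]_\Psi,[\![N]\!]')$. Rules (any $\lambda$-term $M$, any abstraction or application $N$, distinct variables $z,w$): $\mathbf{app}(c_{z,z},\mathbf{capp}(w,f))\rightarrow\mathbf{app}(w,f)$; $\mathbf{app}(c_{z,z},c_{x,M}(x_1,\dots,x_n))\rightarrow c_{x,M}(x_1,\dots,x_n)$; $\mathbf{app}(c_{z,w}(\mathbf{capp}(f,g)),h)\rightarrow\mathbf{app}(f,g)$; $\mathbf{app}(c_{z,w}(c_{x,M}(x_1,\dots,x_n)),h)\rightarrow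 c_{x,M}(x_1,\dots,x_n)$; $\mathbf{app}(c_{y,N}(y_1,\dots,y_m),y)\rightarrow[\![N]\!]_\Psi$ ($FV(\lambda y.N)=y_1,\dots,y_m$); $\mathbf{app}(\mathbf{capp}(x,y),z)\rightarrow\mathbf{app}(\mathbf{app}(x,y),z)$. Rewriting is call-by-value: a step replaces anywhere a subterm $l\sigma$ by $r\sigma$, $\sigma$ mapping variables to constructor terms (closed terms built only from $\mathbf{capp}$ and the $c_{x,M}$). A term is in normal form if no step applies. Back translation: $\langle\!\langle x\rangle\!\rangle_\Psi=x$, $\langle\!\langle\mathbf{app}(u,v)\rangle\!\rangle_\Psi=\langle\!\langle\mathbf{capp}(u,v)\rangle\!\rangle_\Psi=\langle\!\langle u\rangle\!\rangle_\Psi\langle\!\langle v\rangle\!\rangle_\Psi$, $\langle\!\langle c_{x,M}(t_1,\dots,t_n)\rangle\!\rangle_\Psi=(\lambda x.M)\{\langle\!\langle t_1\rangle\!\rangle_\Psi/x_1,\dots,\langle\!\langle t_n\rangle\!\rangle_\Psi/x_n\}$. A closed term $t$ is canonical if either $t=c_{x,M}(t_1,\dots,t_n)$ is a constructor term, or $t=\mathbf{app}(u,v)$ with $u$ canonical and $v$ a constructor term. *)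

theory Defs
  imports Main
begin

datatype lterm = Var nat | Lam nat lterm | App lterm lterm

fun fvs :: "lterm \<Rightarrow> nat set" where
  "fvs (Var x) = {x}"
| "fvs (Lam x M) = fvs M - {x}"
| "fvs (App M N) = fvs M \<union> fvs N"

definition fvlist :: "lterm \<Rightarrow> nat list" where
  "fvlist M = sorted_list_of_set (fvs M)"

fun subst :: "(nat \<Rightarrow> lterm) \<Rightarrow> lterm \<Rightarrow> lterm" where
  "subst \<sigma> (Var x) = \<sigma> x"
| "subst \<sigma> (App M N) = App (subst \<sigma> M) (subst \<sigma> N)"
| "subst \<sigma> (Lam y M) =
     (let A = (\<Union>w\<in>fvs (Lam y M). fvs (\<sigma> w));
          z = (if y \<in> A then (SOME z. z \<notin> A \<union> fvs M) else y)
      in Lam z (subst (\<sigma>(y := Var z)) M))"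

inductive hred :: "lterm \<Rightarrow> lterm \<Rightarrow> bool" where
  beta: "hred (App (Lam x M) N) (subst (Var(x := N)) M)"
| appL: "hred M N \<Longrightarrow> hred (App M L) (App N L)"

definition h_normal :: "lterm \<Rightarrow> bool" where
  "h_normal M \<longleftrightarrow> \<not> (\<exists>N. hred M N)"

text \<open>PV: variables; PApp: function symbol app; Capp: constructor capp;
  C x M ts: constructor c_{x,M} applied to ts.\<close>
datatype pterm = PV nat | PApp pterm pterm | Capp pterm pterm | C nat lterm "pterm list"

definition arity :: "nat \<Rightarrow> lterm \<Rightarrow> nat" where
  "arity x M = length (fvlist (Lam x M))"

fun is_cons :: "pterm \<Rightarrow> bool" where
  "is_cons (PV x) = False"
| "is_cons (PApp t u) = False"
| "is_cons (Capp t u) = (is_cons t \<and> is_cons u)"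
| "is_cons (C x M ts) = (length ts = arity x M \<and> (\<forall>t\<in>set ts. is_cons t))"

fun closed :: "pterm \<Rightarrow> bool" where
  "closed (PV x) = False"
| "closed (PApp t u) = (closed t \<and> closed u)"
| "closed (Capp t u) = (closed t \<and> closed u)"
| "closed (C x M ts) = (\<forall>t\<in>set ts. closed t)"

fun psubst :: "(nat \<Rightarrow> pterm) \<Rightarrow> pterm \<Rightarrow> pterm" where
  "psubst \<sigma> (PV x) = \<sigma> x"
| "psubst \<sigma> (PApp t u) = PApp (psubst \<sigma> t) (psubst \<sigma> u)"
| "psubst \<sigma> (Capp t u) = Capp (psubst \<sigma> t) (psubst \<sigma> u)"
| "psubst \<sigma> (C x M ts) = C x M (map (psubst \<sigma>) ts)"

fun trc :: "lterm \<Rightarrow> pterm" where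
  "trc (Var x) = PV x"
| "trc (Lam x M) = C x M (map PV (fvlist (Lam x M)))"
| "trc (App M N) = Capp (trc M) (trc N)"

fun trpsi :: "lterm \<Rightarrow> pterm" where
  "trpsi (Var x) = PV x"
| "trpsi (Lam x M) = C x M (map PV (fvlist (Lam x M)))"
| "trpsi (App M N) = PApp (trpsi M) (trc N)"

fun is_var :: "lterm \<Rightarrow> bool" where
  "is_var (Var x) = True"
| "is_var _ = False"

text \<open>Root rewrite steps: the rules instantiated by substitutions mapping
  variables to constructor terms.\<close>
inductive root_step :: "pterm \<Rightarrow> pterm \<Rightarrow> bool" where
  r1: "\<lbrakk>is_cons w; is_cons f\<rbrakk> \<Longrightarrow>
       root_step (PApp (C z (Var z) []) (Capp w f)) (PApp w f)"
| r2: "\<lbrakk>length ts = arity x M; \<forall>t\<in>set ts. is_cons t\<rbrakk> \<Longrightarrow>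
       root_step (PApp (C z (Var z) []) (C x M ts)) (C x M ts)"
| r3: "\<lbrakk>z \<noteq> w; is_cons f; is_cons g; is_cons h\<rbrakk> \<Longrightarrow>
       root_step (PApp (C z (Var w) [Capp f g]) h) (PApp f g)"
| r4: "\<lbrakk>z \<noteq> w; length ts = arity x M; \<forall>t\<in>set ts. is_cons t; is_cons h\<rbrakk> \<Longrightarrow>
       root_step (PApp (C z (Var w) [C x M ts]) h) (C x M ts)"
| r5: "\<lbrakk>\<not> is_var N; length ts = arity y N; \<forall>t\<in>set ts. is_cons t; is_cons h\<rbrakk> \<Longrightarrow>
       root_step (PApp (C y N ts) h)
         (psubst (\<lambda>v. if v = y then h
                       else (case map_of (zip (fvlist (Lam y N)) ts) v of
                               Some t \<Rightarrow> t | None \<Rightarrow> PV v)) (trpsi N))"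
| r6: "\<lbrakk>is_cons x; is_cons y; is_cons z\<rbrakk> \<Longrightarrow>
       root_step (PApp (Capp x y) z) (PApp (PApp x y) z)"

inductive pstep :: "pterm \<Rightarrow> pterm \<Rightarrow> bool" where
  root: "root_step t u \<Longrightarrow> pstep t u"
| appL: "pstep t u \<Longrightarrow> pstep (PApp t s) (PApp u s)"
| appR: "pstep t u \<Longrightarrow> pstep (PApp s t) (PApp s u)"
| cappL: "pstep t u \<Longrightarrow> pstep (Capp t s) (Capp u s)"
| cappR: "pstep t u \<Longrightarrow> pstep (Capp s t) (Capp s u)"
| cArg: "\<lbrakk>i < length ts; pstep (ts ! i) u\<rbrakk> \<Longrightarrow> pstep (C x M ts) (C x M (ts[i := u]))"

definition p_normal :: "pterm \<Rightarrow> bool" where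
  "p_normal t \<longleftrightarrow> \<not> (\<exists>u. pstep t u)"

fun backtr :: "pterm \<Rightarrow> lterm" where
  "backtr (PV x) = Var x"
| "backtr (PApp u v) = App (backtr u) (backtr v)"
| "backtr (Capp u v) = App (backtr u) (backtr v)"
| "backtr (C x M ts) =
     subst (\<lambda>v. case map_of (zip (fvlist (Lam x M)) (map backtr ts)) v of
                   Some N \<Rightarrow> N | None \<Rightarrow> Var v) (Lam x M)"

fun canonical :: "pterm \<Rightarrow> bool" where
  "canonical (C x M ts) = is_cons (C x M ts)"
| "canonical (PApp u v) = (canonical u \<and> is_cons v)"
| "canonical _ = False"

end

theory Submission
  imports Defs
begin

text \<open>A canonical term is either a constructor term or has the shape
  app(...app(c_{x,M}(ts), v_1)..., v_n) with n \<ge> 1. Constructor terms contain no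
  function symbol, so no rule applies to them, and they back-translate to
  abstractions, which are \<open>\<rightarrow>\<^sub>h\<close>-normal. In the second shape, the innermost
  application of a constructor term to a constructor term is always an instance of
  one of the rules (which one depends on whether M is a variable), and its
  back-translation is a \<open>\<beta>\<close>-redex in head position.\<close>

lemma pstep_not_is_cons: "pstep t u \<Longrightarrow> \<not> is_cons t"
proof (induction rule: pstep.induct)
  case (root t u)
  then show ?case by (cases rule: root_step.cases) auto
next
  case (cArg i ts u x M)
  then show ?case by (auto dest: nth_mem)
qed auto

lemma is_cons_p_normal: "is_cons t \<Longrightarrow> p_normal t"
  unfolding p_normal_def using pstep_not_is_cons by blast

lemma backtr_C_is_Lam: "\<exists>z P. backtr (C x M ts) = Lam z P"
  by (simp add: Let_def)

lemma h_normal_Lam: "h_normal (Lam z P)"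
  unfolding h_normal_def by (auto elim: hred.cases)

lemma arity_Var_self: "arity z (Var z) = 0"
  by (simp add: arity_def fvlist_def)

lemma arity_Var_other: "z \<noteq> w \<Longrightarrow> arity z (Var w) = 1"
  by (simp add: arity_def fvlist_def)

lemma root_step_PApp_is_cons:
  assumes C: "is_cons (C x M ts)" and v: "is_cons v"
  shows "\<exists>s. root_step (PApp (C x M ts) v) s"
proof (cases "is_var M")
  case False
  with C v show ?thesis by (auto intro: root_step.r5)
next
  case True
  then obtain w where M: "M = Var w" by (cases M) auto
  show ?thesis
  proof (cases "w = x")
    case True
    with C M arity_Var_self have "ts = []" by simp
    with C v M True show ?thesis
      by (cases v) (auto intro: root_step.r1 root_step.r2)
  next
    case False
    with C M arity_Var_other obtain s where ts: "ts = [s]" and s: "is_cons s"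
      by (cases ts) auto
    with C v M False show ?thesis
      by (cases s) (auto intro: root_step.r3 root_step.r4)
  qed
qed

lemma canonical_PApp_reducible:
  "canonical (PApp u v) \<Longrightarrow> (\<exists>s. pstep (PApp u v) s) \<and> (\<exists>N. hred (backtr (PApp u v)) N)"
proof (induction u arbitrary: v)
  case (PApp u\<^sub>1 u\<^sub>2)
  then have "canonical (PApp u\<^sub>1 u\<^sub>2)" by simp
  with PApp.IH(1) show ?case by (auto intro: pstep.appL hred.appL)
next
  case (C x M ts)
  then have "\<exists>s. root_step (PApp (C x M ts) v) s"
    by (auto intro: root_step_PApp_is_cons)
  moreover obtain z P where "backtr (C x M ts) = Lam z P"
    using backtr_C_is_Lam by blast
  ultimately show ?case by (auto intro: pstep.root hred.beta)
qed auto

theorem lemma16: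
  assumes "closed t" and "canonical t"
  shows "p_normal t \<longleftrightarrow> h_normal (backtr t)"
proof (cases t)
  case (C x M ts)
  with assms have "p_normal t" by (simp add: is_cons_p_normal)
  moreover have "h_normal (backtr t)"
    using backtr_C_is_Lam C h_normal_Lam by metis
  ultimately show ?thesis by simp
next
  case (PApp u v)
  with assms canonical_PApp_reducible show ?thesis
    unfolding p_normal_def h_normal_def by blast
qed (use assms in auto)

end
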